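(* Let $M\ge 2$ be an even integer, $N=2M+3$ (so $N=4n+3$ with $n\ge1$), and $s\in\mathbb{R}$. Let $H=H^N(s)=(h_1,\dots,h_N)$ be the Fibonacci-polynomial Huffman array defined in the context. Then its aperiodic auto-correlation $A_d=\sum_{i} h_i h_{i+d}$ (with $h_k=0$ for $k\notin\{1,\dots,N\}$), for $-(N-1)\le d\le N-1$, satisfies $A_d=0$ for all $0<|d|<N-1$, and $A_{N-1}=A_{-(N-1)}=-1$. That is, the auto-correlation is $[-1,0,\dots,0,A_0,0,\dots,0,-1]$.
   Context: Fibonacci polynomials: $F_0(s)=0$, $F_1(s)=1$, $F_{r+2}(s)=sF_{r+1}(s)+F_r(s)$ for all integers $r$ (extended to negative indices by the same recursion, so that $F_{-j}(s)=(-1)^{j+1}F_j(s)$). Write $F_j=F_j(s)$. For even $M\ge2$ and $N=2M+3$, the array $H^N(s)=(h_1,\dots,h_N)$ is defined by: $h_1=1$; $h_{1+j}=2sF_j$ for $j=1,\dots,M$; middle element $h_{M+2}=sF_{M+1}-2F_M$; $h_{M+2+j}=2sF_{-(M+1-j)}$ for $j=1,\dots,M$; $h_N=-1$. Equivalently $H^N(s)=2s\,[(2s)^{-1},F_1,\dots,F_M,F_{M+1}/2-F_M/s,F_{-M},\dots,F_{-1},-(2s)^{-1}]$. (E.g. for $s=1$, $M=6$: $[1,2,2,4,6,10,16,-3,-16,10,-6,4,-2,2,-1]$.) *)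

theory Defs
  imports Complex_Main
begin

fun fibn :: "real \<Rightarrow> nat \<Rightarrow> real" where
  "fibn s 0 = 0"
| "fibn s (Suc 0) = 1"
| "fibn s (Suc (Suc r)) = s * fibn s (Suc r) + fibn s r"

text \<open>Extension to all integer indices by the same recursion: F_(-j) = (-1)^(j+1) F_j.\<close>
definition fibp :: "real \<Rightarrow> int \<Rightarrow> real" where
  "fibp s r = (if r \<ge> 0 then fibn s (nat r) else (-1) ^ (nat (-r) + 1) * fibn s (nat (-r)))"

definition huff :: "nat \<Rightarrow> real \<Rightarrow> int \<Rightarrow> real" where
  "huff M s k =
    (let m = int M; N = 2 * m + 3 in
     if k = 1 then 1
     else if 2 \<le> k \<and> k \<le> m + 1 then 2 * s * fibp s (k - 1)
     else if k = m + 2 then s * fibp s (m + 1) - 2 * fibp s m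
     else if m + 3 \<le> k \<and> k \<le> 2 * m + 2 then 2 * s * fibp s (-(m + 1 - (k - m - 2)))
     else if k = N then -1
     else 0)"

definition autocorr :: "(int \<Rightarrow> real) \<Rightarrow> int \<Rightarrow> int \<Rightarrow> real" where
  "autocorr h N d = (\<Sum>i = 1..N. h i * h (i + d))"

end

theory Submission
  imports Defs "HOL-Computational_Algebra.Polynomial"
begin

text \<open>Let \<open>H(x) = h_1 + h_2 x + ... + h_N x^(N-1)\<close>. Multiplying by \<open>1 - s x - x^2\<close> telescopes along
  the Fibonacci recursion inside both blocks of the array, and (using \<open>F_(-M) = -F_M\<close> for even \<open>M\<close>)
  the middle element is exactly what is needed to get \<open>(1 - s x - x^2) H(x) = (1 + s x - x^2) G(x)\<close>
  with the sparse \<open>G(x) = 1 + \<alpha> x^(M+1) - x^(2M+2)\<close>. Reflection \<open>p(x) \<mapsto> x^(deg p) p(1/x)\<close>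
  exchanges the two quadratic factors up to sign, hence
  \<open>H(x) x^(N-1) H(1/x) = G(x) x^(N-1) G(1/x) = -1 + (2 + \<alpha>^2) x^(N-1) - x^(2N-2)\<close>,
  and the coefficients of the left-hand side are the aperiodic autocorrelations of the array.\<close>

lemma fibp_of_nat: "fibp s (int j) = fibn s j"
  by (simp add: fibp_def)

lemma fibp_uminus_of_nat: "fibp s (- int j) = (-1) ^ (j + 1) * fibn s j"
  by (cases j) (auto simp: fibp_def simp flip: of_nat_Suc)

lemma fibp_small: "fibp s 0 = 0" "fibp s 1 = 1" "fibp s 2 = s" "fibp s (-1) = 1" "fibp s (-2) = -s"
  by (simp_all add: fibp_def eval_nat_numeral)

lemma fibp_add_two: "fibp s (r + 2) = s * fibp s (r + 1) + fibp s r"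
proof (cases "r \<ge> -1")
  case True
  then obtain j where j: "r + 1 = int j"
    by (intro that[of "nat (r + 1)"]) simp
  show ?thesis
  proof (cases j)
    case 0
    then have "r = -1" using j by simp
    then show ?thesis by (simp add: fibp_def)
  next
    case (Suc i)
    then have "r = int i" "r + 1 = int (Suc i)" "r + 2 = int (Suc (Suc i))" using j by auto
    then show ?thesis by (simp only: fibp_of_nat) simp
  qed
next
  case False
  then obtain j where j: "r = - int (Suc (Suc j))"
    by (intro that[of "nat (- r - 2)"]) simp
  then have "r + 2 = - int j" "r + 1 = - int (Suc j)" by auto
  then show ?thesis unfolding j by (simp only: fibp_uminus_of_nat) (simp add: algebra_simps)
qed

lemma fibp_uminus_even: "even j \<Longrightarrow> fibp s (- int j) = - fibp s (int j)"
  by (simp add: fibp_uminus_of_nat fibp_of_nat)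

lemma fibp_uminus_odd: "odd j \<Longrightarrow> fibp s (- int j) = fibp s (int j)"
  by (simp add: fibp_uminus_of_nat fibp_of_nat)

definition seq_poly :: "(int \<Rightarrow> 'a::comm_monoid_add) \<Rightarrow> nat \<Rightarrow> 'a poly" where
  "seq_poly h N = (\<Sum>i<N. monom (h (int i + 1)) i)"

lemma coeff_seq_poly: "coeff (seq_poly h N) i = (if i < N then h (int i + 1) else 0)"
  by (simp add: seq_poly_def coeff_sum coeff_monom)

lemma degree_seq_poly: "0 < N \<Longrightarrow> h (int N) \<noteq> 0 \<Longrightarrow> degree (seq_poly h N) = N - 1"
  by (intro antisym degree_le le_degree) (auto simp: coeff_seq_poly of_nat_diff)

locale supported_seq =
  fixes h :: "int \<Rightarrow> real" and N :: nat
  assumes vanish: "\<And>k. k < 1 \<or> k > int N \<Longrightarrow> h k = 0"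
    and last_nonzero: "h (int N) \<noteq> 0"
begin

lemma coeff_seq_poly_eq: "coeff (seq_poly h N) i = h (int i + 1)"
  by (simp add: coeff_seq_poly vanish)

lemma coeff_reflect_seq_poly: "coeff (reflect_poly (seq_poly h N)) j = h (int N - int j)"
proof -
  have "0 < N" using vanish last_nonzero by fastforce
  then have "degree (seq_poly h N) = N - 1" using last_nonzero by (rule degree_seq_poly)
  moreover have "int (N - 1 - j) + 1 = int N - int j" if "j \<le> N - 1" for j
    using that \<open>0 < N\<close> by linarith
  ultimately show ?thesis
    by (auto simp: coeff_reflect_poly coeff_seq_poly_eq vanish)
qed

lemma autocorr_eq_coeff_mult_reflect_poly:
  assumes d: "\<bar>d\<bar> < int N"
  shows "autocorr h (int N) d = coeff (seq_poly h N * reflect_poly (seq_poly h N)) (nat (int N - 1 - d))"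
proof -
  define n where "n = nat (int N - 1 - d)"
  define f where "f i = h (int i + 1) * h (int i + 1 + d)" for i
  have "autocorr h (int N) d = (\<Sum>i<N. f i)"
    unfolding autocorr_def f_def
    by (rule sum.reindex_bij_witness[of _ "\<lambda>i. int i + 1" "\<lambda>k. nat (k - 1)"]) auto
  also have "\<dots> = (\<Sum>i<2 * N. f i)"
    by (rule sum.mono_neutral_left) (auto simp: f_def vanish)
  also have "\<dots> = (\<Sum>i\<le>n. f i)"
  proof (rule sum.mono_neutral_right)
    show "\<forall>i\<in>{..<2 * N} - {..n}. f i = 0"
    proof
      fix i assume "i \<in> {..<2 * N} - {..n}"
      then have "int i + 1 + d > int N" by (auto simp: n_def)
      then show "f i = 0" by (simp add: f_def vanish)
    qed
  qed (use d in \<open>auto simp: n_def\<close>)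
  also have "\<dots> = coeff (seq_poly h N * reflect_poly (seq_poly h N)) n"
    unfolding coeff_mult coeff_seq_poly_eq coeff_reflect_seq_poly f_def
  proof (rule sum.cong)
    fix i assume "i \<in> {..n}"
    then have "int N - int (n - i) = int i + 1 + d" using d by (auto simp: n_def of_nat_diff)
    then show "h (int i + 1) * h (int i + 1 + d) = h (int i + 1) * h (int N - int (n - i))"
      by simp
  qed simp
  finally show ?thesis unfolding n_def .
qed

end

lemma mult_reflect_poly_eq_if_mult_eq:
  fixes A B P Q :: "'a::idom poly"
  assumes PQ: "A * P = B * Q" and AB: "A * reflect_poly A = B * reflect_poly B" and "A \<noteq> 0"
  shows "P * reflect_poly P = Q * reflect_poly Q"
proof -
  have reflected: "reflect_poly A * reflect_poly P = reflect_poly B * reflect_poly Q"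
    using arg_cong[OF PQ, of reflect_poly] by (simp add: reflect_poly_mult)
  have "(A * reflect_poly A) * (P * reflect_poly P) = (A * P) * (reflect_poly A * reflect_poly P)"
    by (simp add: algebra_simps)
  also have "\<dots> = (B * reflect_poly B) * (Q * reflect_poly Q)"
    unfolding PQ reflected by (simp add: algebra_simps)
  finally have "(A * reflect_poly A) * (P * reflect_poly P) = (A * reflect_poly A) * (Q * reflect_poly Q)"
    unfolding AB .
  moreover have "A * reflect_poly A \<noteq> 0"
    using \<open>A \<noteq> 0\<close> by (metis coeff_0_reflect_poly_0_iff coeff_0 mult_eq_0_iff)
  ultimately show ?thesis by simp
qed

definition trinomial :: "'a::comm_ring_1 \<Rightarrow> nat \<Rightarrow> 'a poly" where
  "trinomial a k = 1 + monom a k - monom 1 (2 * k)"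

lemma coeff_trinomial:
  "k \<ge> 1 \<Longrightarrow> coeff (trinomial a k) i
    = (if i = 0 then 1 else if i = k then a else if i = 2 * k then -1 else 0)"
  by (auto simp: trinomial_def coeff_monom)

lemma reflect_poly_trinomial:
  fixes a :: "'a::idom"
  assumes "k \<ge> 1"
  shows "reflect_poly (trinomial a k) = monom a k + monom 1 (2 * k) - 1"
proof -
  have "degree (trinomial a k) = 2 * k"
    using assms by (intro antisym degree_le le_degree) (auto simp: coeff_trinomial)
  then show ?thesis
    using assms by (intro poly_eqI) (auto simp: coeff_reflect_poly coeff_trinomial coeff_monom)
qed

lemma trinomial_mult_reflect_poly:
  fixes a :: "'a::idom"
  assumes "k \<ge> 1"
  shows "trinomial a k * reflect_poly (trinomial a k) = monom (2 + a\<^sup>2) (2 * k) - monom 1 (4 * k) - 1"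
  unfolding reflect_poly_trinomial[OF assms] unfolding trinomial_def
  using assms
  by (intro poly_eqI) (auto simp: ring_distribs mult_monom coeff_monom power2_eq_square numeral_poly)

lemma coeff_quadratic_mult:
  fixes a b c :: "'a::comm_semiring_1"
  shows "coeff ([:a, b, c:] * p) 0 = a * coeff p 0"
    and "coeff ([:a, b, c:] * p) 1 = a * coeff p 1 + b * coeff p 0"
    and "coeff ([:a, b, c:] * p) (n + 2) = a * coeff p (n + 2) + b * coeff p (n + 1) + c * coeff p n"
  by (simp_all add: coeff_pCons algebra_simps numeral_2_eq_2)

lemma reflect_poly_quadratic:
  fixes a b c :: "'a::comm_semiring_0"
  shows "a \<noteq> 0 \<Longrightarrow> c \<noteq> 0 \<Longrightarrow> reflect_poly [:a, b, c:] = [:c, b, a:]"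
  by (simp add: reflect_poly_def)

lemma supported_seq_huff: "supported_seq (huff M s) (2 * M + 3)"
  by unfold_locales (auto simp: huff_def Let_def)

definition huff_poly :: "nat \<Rightarrow> real \<Rightarrow> real poly" where
  "huff_poly M s = seq_poly (huff M s) (2 * M + 3)"

lemma coeff_huff_poly:
  "coeff (huff_poly M s) n =
    (if n = 0 then 1
     else if n \<le> M then 2 * s * fibp s (int n)
     else if n = M + 1 then s * fibp s (int M + 1) - 2 * fibp s (int M)
     else if n \<le> 2 * M + 1 then 2 * s * fibp s (int n - 2 * int M - 2)
     else if n = 2 * M + 2 then -1
     else 0)"
  unfolding huff_poly_def coeff_seq_poly huff_def Let_def by (auto simp: algebra_simps)

text \<open>Inside the two Fibonacci blocks the left-hand side vanishes by the recursion;
  only the borders of the blocks, the middle element and the end points contribute.\<close>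
lemma coeff_huff_poly_recurrence:
  fixes M n :: nat and s :: real
  assumes "even M" "M \<ge> 2"
  defines "h \<equiv> coeff (huff_poly M s)"
    and "g \<equiv> coeff (trinomial (- s * fibp s (int M + 1) - 2 * fibp s (int M)) (M + 1))"
  shows "h (n + 2) - s * h (n + 1) - h n = g (n + 2) + s * g (n + 1) - g n"
proof -
  have F_succ: "fibp s (int M + 1) = s * fibp s (int M) + fibp s (int M - 1)"
    using fibp_add_two[of s "int M - 1"] by (simp add: add.commute)
  have F_neg: "fibp s (- int M) = - fibp s (int M)"
    using assms(1) by (rule fibp_uminus_even)
  have "fibp s (- int (M - 1)) = fibp s (int (M - 1))"
    using assms(1,2) by (intro fibp_uminus_odd) simp
  then have F_neg_pred: "fibp s (1 - int M) = fibp s (int M - 1)"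
    using assms(2) by (simp add: of_nat_diff)
  note defs = h_def g_def coeff_huff_poly coeff_trinomial
  consider "n = 0" | "1 \<le> n \<and> n + 2 \<le> M" | "n + 1 = M" | "n = M" | "n = M + 1"
    | "M + 2 \<le> n \<and> n + 1 \<le> 2 * M" | "n = 2 * M" | "n = 2 * M + 1" | "n = 2 * M + 2"
    | "n > 2 * M + 2"
    using assms by linarith
  then show ?thesis
  proof cases
    case 1
    then show ?thesis using assms by (simp add: defs fibp_small)
  next
    case 2
    then show ?thesis using assms fibp_add_two[of s "int n"] by (simp add: defs algebra_simps)
  next
    case 3
    then have "fibp s (int M - 1) = fibp s (int n)" by force
    then show ?thesis using 3 assms F_succ by (simp add: defs algebra_simps)
  next
    case 4
    then show ?thesis using assms F_succ F_neg by (simp add: defs algebra_simps)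
  next
    case 5
    then show ?thesis using assms F_succ F_neg F_neg_pred by (simp add: defs algebra_simps)
  next
    case 6
    then show ?thesis using assms fibp_add_two[of s "int n - 2 * int M - 2"]
      by (simp add: defs algebra_simps)
  qed (use assms in \<open>simp_all add: defs fibp_small algebra_simps\<close>)
qed

lemma huff_poly_recurrence:
  assumes "even M" "M \<ge> 2"
  shows "[:1, -s, -1:] * huff_poly M s
    = [:1, s, -1:] * trinomial (- s * fibp s (int M + 1) - 2 * fibp s (int M)) (M + 1)"
    (is "?A * ?H = ?B * ?G")
proof (rule poly_eqI)
  fix n :: nat
  consider "n = 0" | "n = 1" | k where "n = k + 2"
    by (metis add_2_eq_Suc' not0_implies_Suc One_nat_def)
  then show "coeff (?A * ?H) n = coeff (?B * ?G) n"
  proof cases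
    case 3
    then show ?thesis
      using coeff_huff_poly_recurrence[OF assms, of s k] by (simp add: coeff_quadratic_mult)
  qed (use assms in \<open>simp_all add: coeff_quadratic_mult coeff_huff_poly coeff_trinomial fibp_small\<close>)
qed

lemma huff_poly_mult_reflect_poly:
  fixes M :: nat and s :: real
  assumes "even M" "M \<ge> 2"
  defines "\<alpha> \<equiv> - s * fibp s (int M + 1) - 2 * fibp s (int M)"
  shows "huff_poly M s * reflect_poly (huff_poly M s)
    = monom (2 + \<alpha>\<^sup>2) (2 * M + 2) - monom 1 (4 * M + 4) - 1"
proof -
  have "[:1, -s, -1:] * reflect_poly [:1, -s, -1:] = [:1, s, -1:] * reflect_poly [:1, s, -1:]"
    by (simp add: reflect_poly_quadratic)
  then have "huff_poly M s * reflect_poly (huff_poly M s)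
      = trinomial \<alpha> (M + 1) * reflect_poly (trinomial \<alpha> (M + 1))"
    unfolding \<alpha>_def
    by (rule mult_reflect_poly_eq_if_mult_eq[OF huff_poly_recurrence[OF assms(1,2)]]) simp
  also have "\<dots> = monom (2 + \<alpha>\<^sup>2) (2 * M + 2) - monom 1 (4 * M + 4) - 1"
    using trinomial_mult_reflect_poly[of "M + 1" \<alpha>] by (simp add: algebra_simps)
  finally show ?thesis .
qed

theorem mainTheorem1:
  fixes M :: nat and s :: real
  assumes "even M" and "M \<ge> 2"
  defines "N \<equiv> 2 * int M + 3"
  shows "(\<forall>d. 0 < \<bar>d\<bar> \<and> \<bar>d\<bar> < N - 1 \<longrightarrow> autocorr (huff M s) N d = 0)
       \<and> autocorr (huff M s) N (N - 1) = -1
       \<and> autocorr (huff M s) N (-(N - 1)) = -1"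
proof -
  define \<alpha> where "\<alpha> = - s * fibp s (int M + 1) - 2 * fibp s (int M)"
  have autocorr_eq: "autocorr (huff M s) N d
      = coeff (monom (2 + \<alpha>\<^sup>2) (2 * M + 2) - monom 1 (4 * M + 4) - 1) (nat (N - 1 - d))"
    if "\<bar>d\<bar> \<le> N - 1" for d
  proof -
    have "autocorr (huff M s) N d
        = coeff (huff_poly M s * reflect_poly (huff_poly M s)) (nat (N - 1 - d))"
      using supported_seq.autocorr_eq_coeff_mult_reflect_poly[OF supported_seq_huff, of d M s] that
      by (simp add: huff_poly_def N_def)
    then show ?thesis
      unfolding huff_poly_mult_reflect_poly[OF assms(1,2)] \<alpha>_def .
  qed
  show ?thesis
  proof (intro conjI allI impI)
    fix d assume "0 < \<bar>d\<bar> \<and> \<bar>d\<bar> < N - 1"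
    then show "autocorr (huff M s) N d = 0"
      using autocorr_eq[of d] by (auto simp: N_def coeff_monom)
  next
    show "autocorr (huff M s) N (N - 1) = -1"
      using autocorr_eq[of "N - 1"] by (simp add: N_def coeff_monom)
    show "autocorr (huff M s) N (- (N - 1)) = -1"
      using autocorr_eq[of "- (N - 1)"] by (simp add: N_def coeff_monom nat_add_distrib)
  qed
qed

end
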